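(* Let $H=(V,E)$ be a hypergraph in which every edge has size exactly $d$. There is an adaptive algorithm that, for every unknown contaminated set $S\in E$, interactively designs a family of at most $O(\log|E|+d\log^2 d)$ tests from whose outcomes $S$ is reliably recovered. Moreover, there exist such instances $H=(V,E)$ (with edges of size $d$) for which every adaptive generalized group testing scheme uses at least $\Omega(\log|E|+d)$ tests.
   Context: For a set $S\subseteq V$ and a test $T\subseteq V$, the outcome $y_{T,S}$ is $1$ if $S\cap T\neq\emptyset$ and $0$ otherwise; $T$ separates $A,B\subseteq V$ if $y_{T,A}\ne y_{T,B}$. In adaptive generalized group testing on $H=(V,E)$, a fixed but unknown contaminated set $S\in E$ is given, and tests $T_1,\dots,T_k\subseteq V$ are chosen sequentially, where the choice of $T_i$ may depend on the outcomes $y_{T_j,S}$ for $j<i$; the outcomes must reliably recover $S$, i.e., for every $A\in E$ with $A\ne S$ some $T_i$ separates $A$ and $S$. The scheme uses at most $k$ tests if for every $S\in E$ the number of tests chosen is at most $k$. The asymptotic notation hides absolute constants. *)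

theory Defs
  imports Complex_Main
begin

text \<open>An adaptive testing scheme is a binary decision tree: each inner node
  holds a test T; the left subtree is followed on outcome 0, the right on outcome 1.\<close>
datatype 'a gtree = Leaf | Test "'a set" "'a gtree" "'a gtree"

definition outcome :: "'a set \<Rightarrow> 'a set \<Rightarrow> bool" where
  "outcome T S \<longleftrightarrow> S \<inter> T \<noteq> {}"

definition separates :: "'a set \<Rightarrow> 'a set \<Rightarrow> 'a set \<Rightarrow> bool" where
  "separates T A B \<longleftrightarrow> outcome T A \<noteq> outcome T B"

fun tests_on :: "'a gtree \<Rightarrow> 'a set \<Rightarrow> 'a set list" where
  "tests_on Leaf S = []"
| "tests_on (Test T l r) S = T # tests_on (if outcome T S then r else l) S"

fun all_tests :: "'a gtree \<Rightarrow> 'a set set" where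
  "all_tests Leaf = {}"
| "all_tests (Test T l r) = insert T (all_tests l \<union> all_tests r)"

definition tests_within :: "'a set \<Rightarrow> 'a gtree \<Rightarrow> bool" where
  "tests_within V t \<longleftrightarrow> (\<forall>T\<in>all_tests t. T \<subseteq> V)"

definition recovers :: "'a set set \<Rightarrow> 'a gtree \<Rightarrow> bool" where
  "recovers E t \<longleftrightarrow>
     (\<forall>S\<in>E. \<forall>A\<in>E. A \<noteq> S \<longrightarrow> (\<exists>T\<in>set (tests_on t S). separates T A S))"

definition uses_at_most :: "'a set set \<Rightarrow> 'a gtree \<Rightarrow> real \<Rightarrow> bool" where
  "uses_at_most E t k \<longleftrightarrow> (\<forall>S\<in>E. real (length (tests_on t S)) \<le> k)"

end

theory Submission
  imports Defs
begin

(* Upper bound: the potential 3 log2 |F| - |\<Inter>F| of a family F of candidate sets can always be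
   lowered by 1 on both sides of a single test. If some element v outside the common core \<Inter>F
   lies in more than half of the sets, test {v}: the sets missing v are fewer than half of F,
   and the sets containing v gain v in their core. Otherwise a greedily grown set of non-core
   elements splits F into two parts of at most 3/4 |F| each, and (4/3)^3 > 2. Since the
   potential of a single set of size d is -d, every branch has at most 3 log2 |E| + d tests,
   which is even better than the claimed O(log |E| + d log^2 d).
   Lower bound: on all d-subsets of a (d + 1 + N)-element set, halving gives log2 |E| tests,
   and the d + 1 complements of the points of a (d + 1)-subset need d tests, since every test
   gives one of its outcomes to at most one of them. *)

lemma recovers_subset: "recovers F t \<Longrightarrow> G \<subseteq> F \<Longrightarrow> recovers G t"
  unfolding recovers_def by blast

lemma recovers_Leaf_iff: "recovers F Leaf \<longleftrightarrow> (\<forall>A\<in>F. \<forall>B\<in>F. A = B)"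
  unfolding recovers_def by auto

lemma recovers_Test_iff:
  "recovers F (Test T l r) \<longleftrightarrow>
     recovers {S\<in>F. \<not> outcome T S} l \<and> recovers {S\<in>F. outcome T S} r"
  unfolding recovers_def separates_def by (auto 0 4)

lemma tests_within_Leaf [simp]: "tests_within V Leaf"
  by (simp add: tests_within_def)

lemma tests_within_Test [simp]:
  "tests_within V (Test T l r) \<longleftrightarrow> T \<subseteq> V \<and> tests_within V l \<and> tests_within V r"
  by (auto simp: tests_within_def)

lemma uses_at_most_Test_iff:
  "uses_at_most F (Test T l r) k \<longleftrightarrow>
     uses_at_most {S\<in>F. \<not> outcome T S} l (k - 1) \<and> uses_at_most {S\<in>F. outcome T S} r (k - 1)"
  by (auto simp: uses_at_most_def)

lemma uses_at_most_mono: "uses_at_most F t k \<Longrightarrow> k \<le> k' \<Longrightarrow> uses_at_most F t k'"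
  unfolding uses_at_most_def by force

lemma card_filter_add_card_filter_not:
  "finite A \<Longrightarrow> card {x\<in>A. P x} + card {x\<in>A. \<not> P x} = card A"
  using card_Int_Diff[of A "Collect P"] by (simp add: Int_def set_diff_eq conj_commute)

lemma recovers_ex_card_le_exp:
  assumes "finite F" "F \<noteq> {}" "recovers F t"
  shows "\<exists>S\<in>F. card F \<le> 2 ^ length (tests_on t S)"
  using assms
proof (induction t arbitrary: F)
  case Leaf
  then have "card F \<le> 1" by (simp add: recovers_Leaf_iff card_le_Suc0_iff_eq)
  with Leaf.prems(2) show ?case by auto
next
  case (Test T l r)
  define G where "G b = {S\<in>F. outcome T S = b}" for b
  have "card (G True) + card (G False) = card F"
    unfolding G_def using card_filter_add_card_filter_not[OF Test.prems(1)] by simp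
  then obtain b where b: "card F \<le> 2 * card (G b)"
    by (metis mult_2 nat_le_linear add_le_mono)
  moreover have "card F > 0"
    using Test.prems(1,2) by (simp add: card_gt_0_iff)
  ultimately have "card (G b) > 0" by linarith
  then have "G b \<noteq> {}" by auto
  moreover have "finite (G b)"
    using Test.prems(1) by (simp add: G_def)
  moreover have "recovers (G b) (if b then r else l)"
    using Test.prems(3) by (simp add: G_def recovers_Test_iff)
  ultimately obtain S where "S \<in> G b" "card (G b) \<le> 2 ^ length (tests_on (if b then r else l) S)"
    using Test.IH by (cases b) auto
  with b show ?case by (intro bexI[of _ S]) (auto simp: G_def)
qed

definition isolates_at_most_one :: "'a set set \<Rightarrow> bool" where
  "isolates_at_most_one F \<longleftrightarrow> (\<forall>T. \<exists>b A. {S\<in>F. outcome T S = b} \<subseteq> {A})"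

lemma isolates_at_most_one_subset:
  assumes "isolates_at_most_one F" "G \<subseteq> F"
  shows "isolates_at_most_one G"
  unfolding isolates_at_most_one_def
proof
  fix T
  have "\<exists>b A. {S\<in>F. outcome T S = b} \<subseteq> {A}"
    using assms(1) unfolding isolates_at_most_one_def by (rule spec)
  then obtain b A where "{S\<in>F. outcome T S = b} \<subseteq> {A}"
    by (elim exE)
  moreover have "{S\<in>G. outcome T S = b} \<subseteq> {S\<in>F. outcome T S = b}"
    using assms(2) by auto
  ultimately have "{S\<in>G. outcome T S = b} \<subseteq> {A}"
    by (rule order_trans[rotated])
  then show "\<exists>b A. {S\<in>G. outcome T S = b} \<subseteq> {A}"
    by (intro exI)
qed

lemma recovers_ex_card_le_Suc:
  assumes "finite F" "F \<noteq> {}" "recovers F t" "isolates_at_most_one F"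
  shows "\<exists>S\<in>F. card F \<le> Suc (length (tests_on t S))"
  using assms
proof (induction t arbitrary: F)
  case Leaf
  then have "card F \<le> 1" by (simp add: recovers_Leaf_iff card_le_Suc0_iff_eq)
  with Leaf.prems(2) show ?case by auto
next
  case (Test T l r)
  define G where "G b = {S\<in>F. outcome T S = b}" for b
  have "\<exists>b A. G b \<subseteq> {A}"
    using Test.prems(4) unfolding isolates_at_most_one_def G_def by (rule spec)
  then obtain b A where "G b \<subseteq> {A}"
    by (elim exE)
  then have "card (G b) \<le> 1"
    using card_mono[of "{A}"] by fastforce
  moreover have "card (G b) + card (G (\<not> b)) = card F"
    unfolding G_def
    using card_filter_add_card_filter_not[OF Test.prems(1), of "\<lambda>S. outcome T S = b"] by simp
  ultimately have F_le: "card F \<le> Suc (card (G (\<not> b)))" by linarith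
  show ?case
  proof (cases "G (\<not> b) = {}")
    case True
    with F_le Test.prems(2) show ?thesis by auto
  next
    case False
    have "finite (G (\<not> b))" "isolates_at_most_one (G (\<not> b))"
      using Test.prems(1) isolates_at_most_one_subset[OF Test.prems(4)] by (auto simp: G_def)
    moreover have "recovers (G (\<not> b)) (if b then l else r)"
      using Test.prems(3) by (simp add: G_def recovers_Test_iff)
    ultimately obtain S where
      "S \<in> G (\<not> b)" "card (G (\<not> b)) \<le> Suc (length (tests_on (if b then l else r) S))"
      using Test.IH False by (cases b) auto
    with F_le show ?thesis by (intro bexI[of _ S]) (auto simp: G_def)
  qed
qed

lemma isolates_at_most_one_point_complements:
  "isolates_at_most_one ((\<lambda>i. U - {i}) ` U)"
  unfolding isolates_at_most_one_def
proof
  fix T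
  show "\<exists>b A. {S\<in>(\<lambda>i. U - {i}) ` U. outcome T S = b} \<subseteq> {A}"
  proof (cases "T \<inter> U = {}")
    case True
    then have "{S\<in>(\<lambda>i. U - {i}) ` U. outcome T S = True} = {}"
      by (auto simp: outcome_def)
    then show ?thesis by blast
  next
    case False
    then obtain a where "a \<in> T" "a \<in> U" by blast
    then have "{S\<in>(\<lambda>i. U - {i}) ` U. outcome T S = False} \<subseteq> {U - {a}}"
      by (auto simp: outcome_def)
    then show ?thesis by blast
  qed
qed

lemma recovers_length_lower_bound:
  assumes "finite E" "recovers E t" "E' \<subseteq> E" "isolates_at_most_one E'" "card E' = Suc d"
  shows "\<exists>S\<in>E. 1/2 * (log 2 (real (card E)) + real d) \<le> real (length (tests_on t S))"
proof -
  have "finite E'" "E' \<noteq> {}"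
    using assms(1,3,5) finite_subset by fastforce+
  with assms(3) have "E \<noteq> {}" by blast
  with assms(1,2) obtain S1 where S1: "S1 \<in> E" "card E \<le> 2 ^ length (tests_on t S1)"
    using recovers_ex_card_le_exp by blast
  from \<open>E \<noteq> {}\<close> assms(1) have "card E > 0" by (simp add: card_gt_0_iff)
  with S1(2) have log_le: "log 2 (real (card E)) \<le> real (length (tests_on t S1))"
    by (rule log2_of_power_le)
  obtain S2 where S2: "S2 \<in> E'" "card E' \<le> Suc (length (tests_on t S2))"
    using recovers_ex_card_le_Suc[OF \<open>finite E'\<close> \<open>E' \<noteq> {}\<close> recovers_subset[OF assms(2,3)] assms(4)]
    by blast
  with assms(5) have d_le: "real d \<le> real (length (tests_on t S2))" by simp
  show ?thesis
  proof (cases "length (tests_on t S2) \<le> length (tests_on t S1)")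
    case True
    with S1(1) log_le d_le show ?thesis by (intro bexI[of _ S1]) auto
  next
    case False
    with S2(1) assms(3) log_le d_le show ?thesis by (intro bexI[of _ S2]) auto
  qed
qed

lemma recovers_all_subsets_lower_bound:
  fixes V :: "'a set" and d :: nat
  defines "E \<equiv> {e. e \<subseteq> V \<and> card e = d}"
  assumes "finite V" "d < card V" "recovers E t"
  shows "\<exists>S\<in>E. 1/2 * (log 2 (real (card E)) + real d) \<le> real (length (tests_on t S))"
proof -
  obtain U where U: "U \<subseteq> V" "card U = Suc d" "finite U"
    using obtain_subset_with_card_n[of "Suc d" V] assms(3) by auto
  define E' where "E' = (\<lambda>i. U - {i}) ` U"
  have "finite E"
    using assms(2) by (simp add: E_def)
  moreover have "E' \<subseteq> E"
    using U by (auto simp: E'_def E_def)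
  moreover have "inj_on (\<lambda>i. U - {i}) U"
    by (rule inj_onI) blast
  then have "card E' = Suc d"
    using U(2) by (simp add: E'_def card_image)
  ultimately show ?thesis
    using assms(4) isolates_at_most_one_point_complements[of U]
    by (intro recovers_length_lower_bound) (simp_all add: E'_def)
qed

definition test_budget :: "'a set set \<Rightarrow> real" where
  "test_budget F = 3 * log 2 (real (card F)) - real (card (\<Inter>F))"

lemma Inter_subset_and_finite:
  assumes "finite V" "F \<subseteq> Pow V" "G \<subseteq> F" "G \<noteq> {}"
  shows "\<Inter>F \<subseteq> \<Inter>G" "finite (\<Inter>G)"
proof -
  show "\<Inter>F \<subseteq> \<Inter>G" using assms(3) by (rule Inter_anti_mono)
  from assms(4) obtain S where "S \<in> G" by blast
  with assms(2,3) have "\<Inter>G \<subseteq> V" by blast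
  with assms(1) show "finite (\<Inter>G)" by (rule finite_subset[rotated])
qed

lemma log2_card_mono:
  assumes "finite F" "G \<subseteq> F" "G \<noteq> {}"
  shows "log 2 (real (card G)) \<le> log 2 (real (card F))"
proof -
  have "finite G" using assms(1,2) by (rule finite_subset[rotated])
  with assms(3) have "card G > 0" by (simp add: card_gt_0_iff)
  then show ?thesis using card_mono[OF assms(1,2)] by simp
qed

lemma test_budget_common_element:
  assumes "finite V" "F \<subseteq> Pow V" "G \<subseteq> F" "G \<noteq> {}" "v \<in> \<Inter>G" "v \<notin> \<Inter>F"
  shows "1 + test_budget G \<le> test_budget F"
proof -
  have "finite F" using assms(1,2) by (metis finite_Pow_iff finite_subset)
  have sub: "\<Inter>F \<subseteq> \<Inter>G" and fin: "finite (\<Inter>G)"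
    using Inter_subset_and_finite[OF assms(1-4)] by auto
  from sub fin have "finite (\<Inter>F)" by (rule finite_subset)
  moreover from sub assms(5) have "card (insert v (\<Inter>F)) \<le> card (\<Inter>G)"
    by (intro card_mono fin) simp
  ultimately have "card (\<Inter>F) + 1 \<le> card (\<Inter>G)" using assms(6) by simp
  with log2_card_mono[OF \<open>finite F\<close> assms(3,4)] show ?thesis
    unfolding test_budget_def by linarith
qed

lemma one_plus_three_log2_le:
  fixes a n :: real
  assumes "0 < a" "4 * a \<le> 3 * n"
  shows "1 + 3 * log 2 a \<le> 3 * log 2 n"
proof -
  have "0 < n" using assms by linarith
  have "(4 * a) ^ 3 \<le> (3 * n) ^ 3" using assms by (intro power_mono) auto
  then have "64 * a ^ 3 \<le> 27 * n ^ 3" by (simp add: power_mult_distrib)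
  with \<open>0 < n\<close> have "2 * a ^ 3 \<le> n ^ 3"
    using zero_le_power[of n 3] by linarith
  then have "log 2 (2 * a ^ 3) \<le> log 2 (n ^ 3)"
    using assms(1) by (intro log_mono) auto
  then show ?thesis
    using assms(1) \<open>0 < n\<close> by (simp add: log_mult log_nat_power)
qed

lemma test_budget_shrink:
  assumes "finite V" "F \<subseteq> Pow V" "G \<subseteq> F" "G \<noteq> {}" "4 * card G \<le> 3 * card F"
  shows "1 + test_budget G \<le> test_budget F"
proof -
  have "finite F" using assms(1,2) by (metis finite_Pow_iff finite_subset)
  have "finite G" using \<open>finite F\<close> assms(3) by (rule finite_subset[rotated])
  with assms(4) have "0 < real (card G)" by (simp add: card_gt_0_iff)
  moreover have "4 * real (card G) \<le> 3 * real (card F)"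
    using assms(5) by linarith
  ultimately have "1 + 3 * log 2 (real (card G)) \<le> 3 * log 2 (real (card F))"
    by (rule one_plus_three_log2_le)
  moreover have "card (\<Inter>F) \<le> card (\<Inter>G)"
    using Inter_subset_and_finite[OF assms(1-4)] by (simp add: card_mono)
  ultimately show ?thesis
    unfolding test_budget_def by linarith
qed

(* Grow T one element of W at a time: each step removes at most half of F from the sets
   avoiding T, so their number cannot jump from above 3/4 |F| to below 1/4 |F|. *)
lemma exists_balanced_subset:
  assumes "finite F" "finite W"
    and "\<forall>w\<in>W. 2 * card {S\<in>F. w \<in> S} \<le> card F"
    and "4 * card {S\<in>F. S \<inter> W = {}} \<le> 3 * card F"
  shows "\<exists>T\<subseteq>W. card F \<le> 4 * card {S\<in>F. S \<inter> T = {}} \<and> 4 * card {S\<in>F. S \<inter> T = {}} \<le> 3 * card F"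
  using assms(2-4)
proof (induction W rule: finite_induct)
  case empty
  then show ?case by auto
next
  case (insert w W)
  show ?case
  proof (cases "4 * card {S\<in>F. S \<inter> W = {}} \<le> 3 * card F")
    case True
    with insert show ?thesis by blast
  next
    case False
    have "{S\<in>F. S \<inter> W = {}} \<subseteq> {S\<in>F. S \<inter> insert w W = {}} \<union> {S\<in>F. w \<in> S}"
      by auto
    then have "card {S\<in>F. S \<inter> W = {}} \<le> card ({S\<in>F. S \<inter> insert w W = {}} \<union> {S\<in>F. w \<in> S})"
      using assms(1) by (intro card_mono) auto
    also have "\<dots> \<le> card {S\<in>F. S \<inter> insert w W = {}} + card {S\<in>F. w \<in> S}"
      by (rule card_Un_le)
    finally have "card {S\<in>F. S \<inter> W = {}} \<le> card {S\<in>F. S \<inter> insert w W = {}} + card {S\<in>F. w \<in> S}" .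
    moreover have "2 * card {S\<in>F. w \<in> S} \<le> card F"
      using insert.prems(1) by simp
    ultimately show ?thesis
      using False insert.prems(2) by (intro exI[of _ "insert w W"]) auto
  qed
qed

definition reduces_budget :: "'a set set \<Rightarrow> 'a set \<Rightarrow> bool" where
  "reduces_budget F T \<longleftrightarrow>
     (\<forall>b. {S\<in>F. outcome T S = b} \<noteq> {} \<and> 1 + test_budget {S\<in>F. outcome T S = b} \<le> test_budget F)"

lemma popular_element_reduces_budget:
  assumes "finite V" "F \<subseteq> Pow V" "v \<notin> \<Inter>F" "card F < 2 * card {S\<in>F. v \<in> S}"
  shows "reduces_budget F {v}"
  unfolding reduces_budget_def
proof
  fix b
  have "finite F" using assms(1,2) by (metis finite_Pow_iff finite_subset)
  have outcome_v: "outcome {v} S \<longleftrightarrow> v \<in> S" for S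
    by (auto simp: outcome_def)
  show "{S\<in>F. outcome {v} S = b} \<noteq> {} \<and> 1 + test_budget {S\<in>F. outcome {v} S = b} \<le> test_budget F"
  proof (cases b)
    case True
    have "{S\<in>F. v \<in> S} \<noteq> {}"
      using assms(4) by (metis card.empty mult_0_right not_less0)
    moreover have "1 + test_budget {S\<in>F. v \<in> S} \<le> test_budget F"
      using assms(1-3) calculation by (intro test_budget_common_element) auto
    ultimately show ?thesis using True by (simp add: outcome_v)
  next
    case False
    have "{S\<in>F. v \<notin> S} \<noteq> {}"
      using assms(3) by blast
    moreover have "card {S\<in>F. v \<in> S} + card {S\<in>F. v \<notin> S} = card F"
      by (rule card_filter_add_card_filter_not[OF \<open>finite F\<close>])
    then have "1 + test_budget {S\<in>F. v \<notin> S} \<le> test_budget F"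
      using assms(1,2,4) calculation by (intro test_budget_shrink) auto
    ultimately show ?thesis using False by (simp add: outcome_v)
  qed
qed

lemma balanced_test_reduces_budget:
  assumes "finite V" "F \<subseteq> Pow V" "F \<noteq> {}"
    and "card F \<le> 4 * card {S\<in>F. \<not> outcome T S}" "4 * card {S\<in>F. \<not> outcome T S} \<le> 3 * card F"
  shows "reduces_budget F T"
  unfolding reduces_budget_def
proof
  fix b
  have "finite F" using assms(1,2) by (metis finite_Pow_iff finite_subset)
  with assms(3) have "card F > 0" by (simp add: card_gt_0_iff)
  have "card {S\<in>F. outcome T S} + card {S\<in>F. \<not> outcome T S} = card F"
    by (rule card_filter_add_card_filter_not[OF \<open>finite F\<close>])
  with assms(4,5) \<open>card F > 0\<close>
  have "card {S\<in>F. outcome T S = b} > 0 \<and> 4 * card {S\<in>F. outcome T S = b} \<le> 3 * card F"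
    by (cases b) auto
  then have "{S\<in>F. outcome T S = b} \<noteq> {}" "4 * card {S\<in>F. outcome T S = b} \<le> 3 * card F"
    by (metis card.empty less_irrefl, blast)
  with assms(1,2) show "{S\<in>F. outcome T S = b} \<noteq> {} \<and>
      1 + test_budget {S\<in>F. outcome T S = b} \<le> test_budget F"
    by (auto intro: test_budget_shrink)
qed

lemma exists_budget_reducing_test:
  assumes "finite V" "F \<subseteq> Pow V" "2 \<le> card F"
  obtains T where "T \<subseteq> V" "reduces_budget F T"
proof (cases "\<exists>v. v \<notin> \<Inter>F \<and> card F < 2 * card {S\<in>F. v \<in> S}")
  case True
  then obtain v where v: "v \<notin> \<Inter>F" "card F < 2 * card {S\<in>F. v \<in> S}" by blast
  then have "{S\<in>F. v \<in> S} \<noteq> {}"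
    by (metis card.empty mult_0_right not_less0)
  with assms(2) have "{v} \<subseteq> V" by blast
  then show ?thesis using popular_element_reduces_budget[OF assms(1,2) v] by (rule that)
next
  case False
  have "finite F" using assms(1,2) by (metis finite_Pow_iff finite_subset)
  define W where "W = \<Union>F - \<Inter>F"
  have "W \<subseteq> V"
    using assms(2) unfolding W_def by blast
  then have "finite W"
    using assms(1) by (rule finite_subset)
  have "\<forall>w\<in>W. 2 * card {S\<in>F. w \<in> S} \<le> card F"
    using False unfolding W_def by (auto simp: not_less)
  moreover have "S = \<Inter>F" if "S \<in> F" "S \<inter> W = {}" for S
    using that unfolding W_def by blast
  then have "{S\<in>F. S \<inter> W = {}} \<subseteq> {\<Inter>F}"
    by blast
  then have "card {S\<in>F. S \<inter> W = {}} \<le> 1"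
    using card_mono[of "{\<Inter>F}"] by fastforce
  with assms(3) have "4 * card {S\<in>F. S \<inter> W = {}} \<le> 3 * card F" by linarith
  ultimately obtain T where T: "T \<subseteq> W"
    "card F \<le> 4 * card {S\<in>F. \<not> outcome T S}" "4 * card {S\<in>F. \<not> outcome T S} \<le> 3 * card F"
    using exists_balanced_subset[OF \<open>finite F\<close> \<open>finite W\<close>] by (auto simp: outcome_def Int_commute)
  moreover have "F \<noteq> {}" using assms(3) by auto
  ultimately have "reduces_budget F T"
    using assms(1,2) by (intro balanced_test_reduces_budget) auto
  with T(1) \<open>W \<subseteq> V\<close> show ?thesis by (intro that) auto
qed

lemma recovering_scheme_within_budget:
  assumes "finite V" "F \<subseteq> Pow V" "F \<noteq> {}" "\<forall>S\<in>F. card S \<le> d"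
  shows "\<exists>t. tests_within V t \<and> recovers F t \<and> uses_at_most F t (test_budget F + d)"
  using assms(2-4)
proof (induction "card F" arbitrary: F rule: less_induct)
  case less
  have "finite F" using assms(1) less.prems(1) by (metis finite_Pow_iff finite_subset)
  show ?case
  proof (cases "2 \<le> card F")
    case False
    moreover have "card F \<noteq> 0" using less.prems(2) \<open>finite F\<close> by simp
    ultimately have "card F = 1" by linarith
    then obtain S where "F = {S}" by (rule card_1_singletonE)
    with less.prems(3) show ?thesis
      by (intro exI[of _ Leaf]) (simp add: recovers_Leaf_iff uses_at_most_def test_budget_def)
  next
    case True
    then obtain T where T: "T \<subseteq> V" "reduces_budget F T"
      using exists_budget_reducing_test[OF assms(1) less.prems(1)] by blast
    define G where "G b = {S\<in>F. outcome T S = b}" for b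
    have "\<exists>t. tests_within V t \<and> recovers (G b) t \<and> uses_at_most (G b) t (test_budget F + d - 1)" for b
    proof -
      have "G b \<noteq> {}" "G (\<not> b) \<noteq> {}" "1 + test_budget (G b) \<le> test_budget F"
        using T(2) unfolding reduces_budget_def G_def by blast+
      then have "G b \<subset> F" by (auto simp: G_def)
      then have "card (G b) < card F" by (rule psubset_card_mono[OF \<open>finite F\<close>])
      then obtain t where "tests_within V t" "recovers (G b) t" "uses_at_most (G b) t (test_budget (G b) + d)"
        using less.hyps less.prems \<open>G b \<noteq> {}\<close> unfolding G_def by blast
      with \<open>1 + test_budget (G b) \<le> test_budget F\<close> show ?thesis
        by (intro exI[of _ t]) (auto elim: uses_at_most_mono)
    qed
    then obtain t where t: "\<forall>b. tests_within V (t b) \<and> recovers (G b) (t b) \<and>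
        uses_at_most (G b) (t b) (test_budget F + d - 1)"
      by metis
    show ?thesis
      using T(1) spec[OF t, of False] spec[OF t, of True]
      by (intro exI[of _ "Test T (t False) (t True)"])
        (simp add: recovers_Test_iff uses_at_most_Test_iff G_def)
  qed
qed

lemma le_one_plus_mult_log2_squared: "real d \<le> 1 + real d * (log 2 (real d))\<^sup>2"
proof (cases "d \<le> 1")
  case True
  then show ?thesis by (simp add: add_increasing2)
next
  case False
  then have "1 \<le> log 2 (real d)" by simp
  then have "1 \<le> (log 2 (real d))\<^sup>2" by simp
  then have "real d * 1 \<le> real d * (log 2 (real d))\<^sup>2" by (intro mult_left_mono) auto
  then show ?thesis by simp
qed

lemma uniform_test_budget_le:
  assumes "finite E" "E \<noteq> {}" "\<forall>S\<in>E. card S = d"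
  shows "test_budget E + d \<le> 4 * (log 2 (real (card E)) + real d * (log 2 (real d))\<^sup>2)"
proof (cases "card E = 1")
  case True
  then obtain S where "E = {S}" by (rule card_1_singletonE)
  with assms(3) show ?thesis by (simp add: test_budget_def)
next
  case False
  moreover have "card E \<noteq> 0" using assms(1,2) by simp
  ultimately have "2 \<le> card E" by linarith
  then have "1 \<le> log 2 (real (card E))" by simp
  then show ?thesis
    using le_one_plus_mult_log2_squared[of d] unfolding test_budget_def
    by (smt (verit) of_nat_0_le_iff zero_le_power2 mult_nonneg_nonneg)
qed

lemma uniform_recovering_scheme:
  assumes "finite V" "E \<subseteq> Pow V" "\<forall>S\<in>E. card S = d"
  shows "\<exists>t. tests_within V t \<and> recovers E t \<and>
           uses_at_most E t (4 * (log 2 (real (card E)) + real d * (log 2 (real d))\<^sup>2))"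
proof (cases "E = {}")
  case True
  then show ?thesis
    by (intro exI[of _ Leaf]) (simp add: recovers_def uses_at_most_def)
next
  case False
  have "finite E" using assms(1,2) by (metis finite_Pow_iff finite_subset)
  from assms False obtain t where "tests_within V t" "recovers E t"
      "uses_at_most E t (test_budget E + d)"
    using recovering_scheme_within_budget[of V E d] by auto
  with uniform_test_budget_le[OF \<open>finite E\<close> False assms(3)] show ?thesis
    by (blast intro: uses_at_most_mono)
qed

lemma exists_large_uniform_family_lower_bound:
  fixes d N :: nat
  assumes "1 \<le> d"
  shows "\<exists>(V::nat set) E. finite V \<and> E \<subseteq> Pow V \<and> (\<forall>e\<in>E. card e = d) \<and> N \<le> card E \<and>
           (\<forall>t. recovers E t \<longrightarrow>
              (\<exists>S\<in>E. 1/2 * (log 2 (real (card E)) + real d) \<le> real (length (tests_on t S))))"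
proof -
  define V :: "nat set" where "V = {0..<N + Suc d}"
  define E where "E = {e. e \<subseteq> V \<and> card e = d}"
  have "N \<le> card E"
    using n_subsets[of V d] upper_le_binomial[of d "card V"] assms by (simp add: E_def V_def)
  moreover have "\<exists>S\<in>E. 1/2 * (log 2 (real (card E)) + real d) \<le> real (length (tests_on t S))"
    if "recovers E t" for t
    using recovers_all_subsets_lower_bound[of V d t] that by (simp add: E_def V_def)
  ultimately show ?thesis
    by (intro exI[of _ V] exI[of _ E]) (auto simp: E_def V_def)
qed

theorem theorem4:
  shows "(\<exists>C>0. \<forall>(V::nat set) E (d::nat).
            finite V \<longrightarrow> E \<subseteq> Pow V \<longrightarrow> (\<forall>e\<in>E. card e = d) \<longrightarrow>
            (\<exists>t. tests_within V t \<and> recovers E t \<and>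
                 uses_at_most E t (C * (log 2 (real (card E)) + real d * (log 2 (real d))^2))))
       \<and> (\<exists>c>0. \<forall>(d::nat)\<ge>1. \<forall>N::nat. \<exists>(V::nat set) E.
            finite V \<and> E \<subseteq> Pow V \<and> (\<forall>e\<in>E. card e = d) \<and> card E \<ge> N \<and>
            (\<forall>t. tests_within V t \<longrightarrow> recovers E t \<longrightarrow>
                 (\<exists>S\<in>E. real (length (tests_on t S)) \<ge> c * (log 2 (real (card E)) + real d))))"
  by (rule conjI[OF exI[of _ "4::real"] exI[of _ "1/2::real"]])
    (use uniform_recovering_scheme in force, use exists_large_uniform_family_lower_bound in meson, simp)

end
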